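(* Biased Dissolution restricted to instances whose graph $G=(V,E)$ is a complete graph is solvable in $O(|V|^2)$ time (assuming constant-time arithmetic operations).
   Context: For $V'\subseteq V(G)$ let $Z(V',G):=\{(x,y)\mid x\in V',\ y\in V(G)\setminus V',\ \{x,y\}\in E(G)\}$. For positive integers $s,\Delta_s$, an $(s,\Delta_s)$-dissolution for an undirected graph $G$ is a pair $(D,z)$ with $D\subset V(G)$ and $z\colon Z(D,G)\to\{0,\dots,s\}$ such that (a) each $v'\in D$ satisfies $\sum_{(v',v)\in Z(D,G)} z(v',v)=s$, and (b) each $v\in V(G)\setminus D$ satisfies $\sum_{(v',v)\in Z(D,G)} z(v',v)=\Delta_s$. Given $\alpha\colon V(G)\to\{0,\dots,s\}$ and an integer $r_\alpha$, a tuple $(D,z,z_\alpha,R_\alpha)$ is an $r_\alpha$-biased $(s,\Delta_s)$-dissolution for $(G,\alpha)$ if $(D,z)$ is an $(s,\Delta_s)$-dissolution, $z_\alpha\colon Z(D,G)\to\{0,\dots,s\}$, $R_\alpha\subseteq V(G)\setminus D$ with $|R_\alpha|=r_\alpha$, and (c) $z_\alpha(v',v)\le z(v',v)$ for all $(v',v)\in Z(D,G)$; (d) each $v'\in D$ satisfies $\sum_{(v',v)\in Z(D,G)} z_\alpha(v',v)=\alpha(v')$; (e) each $v\in R_\alpha$ satisfies $\alpha(v)+\sum_{(v',v)\in Z(D,G)} z_\alpha(v',v)>(s+\Delta_s)/2$. Biased Dissolution: given an undirected graph $G$, positive integers $s,\Delta_s,r_\alpha$ and $\alpha\colon V(G)\to\{0,\dots,s\}$,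 decide whether an $r_\alpha$-biased $(s,\Delta_s)$-dissolution for $(G,\alpha)$ exists. *)

theory Defs
  imports Complex_Main
begin

text \<open>An undirected graph is given by a vertex set V and a set E of 2-element
  vertex sets (edges).\<close>

definition Zset :: "'a set \<Rightarrow> 'a set \<Rightarrow> 'a set set \<Rightarrow> ('a \<times> 'a) set" where
  "Zset V' V E = {(x, y). x \<in> V' \<and> y \<in> V - V' \<and> {x, y} \<in> E}"

definition dissolution ::
  "'a set \<Rightarrow> 'a set set \<Rightarrow> nat \<Rightarrow> nat \<Rightarrow> 'a set \<Rightarrow> ('a \<times> 'a \<Rightarrow> nat) \<Rightarrow> bool" where
  "dissolution V E s \<Delta> D z \<longleftrightarrow>
     D \<subset> V \<and>
     (\<forall>p \<in> Zset D V E. z p \<le> s) \<and>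
     (\<forall>v' \<in> D. (\<Sum>p \<in> {p \<in> Zset D V E. fst p = v'}. z p) = s) \<and>
     (\<forall>v \<in> V - D. (\<Sum>p \<in> {p \<in> Zset D V E. snd p = v}. z p) = \<Delta>)"

definition biased_dissolution ::
  "'a set \<Rightarrow> 'a set set \<Rightarrow> nat \<Rightarrow> nat \<Rightarrow> nat \<Rightarrow> ('a \<Rightarrow> nat) \<Rightarrow>
   'a set \<Rightarrow> ('a \<times> 'a \<Rightarrow> nat) \<Rightarrow> ('a \<times> 'a \<Rightarrow> nat) \<Rightarrow> 'a set \<Rightarrow> bool" where
  "biased_dissolution V E s \<Delta> r \<alpha> D z z\<^sub>\<alpha> R\<^sub>\<alpha> \<longleftrightarrow>
     dissolution V E s \<Delta> D z \<and>
     (\<forall>p \<in> Zset D V E. z\<^sub>\<alpha> p \<le> s) \<and>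
     R\<^sub>\<alpha> \<subseteq> V - D \<and> card R\<^sub>\<alpha> = r \<and>
     (\<forall>p \<in> Zset D V E. z\<^sub>\<alpha> p \<le> z p) \<and>
     (\<forall>v' \<in> D. (\<Sum>p \<in> {p \<in> Zset D V E. fst p = v'}. z\<^sub>\<alpha> p) = \<alpha> v') \<and>
     (\<forall>v \<in> R\<^sub>\<alpha>. real (\<alpha> v + (\<Sum>p \<in> {p \<in> Zset D V E. snd p = v}. z\<^sub>\<alpha> p))
                      > real (s + \<Delta>) / 2)"

definition Biased_Dissolution ::
  "'a set \<Rightarrow> 'a set set \<Rightarrow> nat \<Rightarrow> nat \<Rightarrow> nat \<Rightarrow> ('a \<Rightarrow> nat) \<Rightarrow> bool" where
  "Biased_Dissolution V E s \<Delta> r \<alpha> \<longleftrightarrow>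
     (\<exists>D z z\<^sub>\<alpha> R\<^sub>\<alpha>. biased_dissolution V E s \<Delta> r \<alpha> D z z\<^sub>\<alpha> R\<^sub>\<alpha>)"

definition complete_edges :: "nat \<Rightarrow> nat set set" where
  "complete_edges n = {{x, y} | x y. x < n \<and> y < n \<and> x \<noteq> y}"

text \<open>Registers hold unbounded integers; there are unboundedly many arrays with
  integer addresses, initially 0. Every arithmetic operation costs constant time
  (expressions are part of the fixed program, so their evaluation is charged
  as a constant per executed command).\<close>

record state =
  regs :: "nat \<Rightarrow> int"
  arrs :: "nat \<Rightarrow> int \<Rightarrow> int"

datatype aexp = N int | Reg nat | Arr nat aexp
  | Plus aexp aexp | Minus aexp aexp | Times aexp aexp | Div aexp aexp | Mod aexp aexp

datatype bexp = Bc bool | Not bexp | And bexp bexp | Less aexp aexp | Eq aexp aexp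

datatype com = SKIP | Assign nat aexp | ArrAssign nat aexp aexp
  | Seq com com | If bexp com com | While bexp com

fun aval :: "aexp \<Rightarrow> state \<Rightarrow> int" where
  "aval (N i) st = i"
| "aval (Reg k) st = regs st k"
| "aval (Arr a e) st = arrs st a (aval e st)"
| "aval (Plus e1 e2) st = aval e1 st + aval e2 st"
| "aval (Minus e1 e2) st = aval e1 st - aval e2 st"
| "aval (Times e1 e2) st = aval e1 st * aval e2 st"
| "aval (Div e1 e2) st = aval e1 st div aval e2 st"
| "aval (Mod e1 e2) st = aval e1 st mod aval e2 st"

fun bval :: "bexp \<Rightarrow> state \<Rightarrow> bool" where
  "bval (Bc b) st = b"
| "bval (Not b) st = (\<not> bval b st)"
| "bval (And b1 b2) st = (bval b1 st \<and> bval b2 st)"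
| "bval (Less e1 e2) st = (aval e1 st < aval e2 st)"
| "bval (Eq e1 e2) st = (aval e1 st = aval e2 st)"

inductive exec :: "com \<Rightarrow> state \<Rightarrow> nat \<Rightarrow> state \<Rightarrow> bool" where
  Skip: "exec SKIP st 1 st"
| Assign: "exec (Assign k e) st 1 (st\<lparr>regs := (regs st)(k := aval e st)\<rparr>)"
| ArrAssign: "exec (ArrAssign a i e) st 1
     (st\<lparr>arrs := (arrs st)(a := (arrs st a)(aval i st := aval e st))\<rparr>)"
| Seq: "exec c1 st t1 st1 \<Longrightarrow> exec c2 st1 t2 st2 \<Longrightarrow> exec (Seq c1 c2) st (t1 + t2) st2"
| IfT: "bval b st \<Longrightarrow> exec c1 st t st' \<Longrightarrow> exec (If b c1 c2) st (t + 1) st'"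
| IfF: "\<not> bval b st \<Longrightarrow> exec c2 st t st' \<Longrightarrow> exec (If b c1 c2) st (t + 1) st'"
| WhileF: "\<not> bval b st \<Longrightarrow> exec (While b c) st 1 st"
| WhileT: "bval b st \<Longrightarrow> exec c st t1 st1 \<Longrightarrow> exec (While b c) st1 t2 st2 \<Longrightarrow>
     exec (While b c) st (t1 + t2 + 1) st2"

text \<open>Input encoding of a Biased Dissolution instance on the complete graph with
  vertex set {0..<n}: register 0 = n, 1 = s, 2 = Delta_s, 3 = r_alpha,
  array 0 holds alpha(0), ..., alpha(n-1) at addresses 0..n-1; everything else 0.
  The answer is read from register 0 (nonzero = yes).\<close>
definition init_state :: "nat \<Rightarrow> nat \<Rightarrow> nat \<Rightarrow> nat \<Rightarrow> (nat \<Rightarrow> nat) \<Rightarrow> state" where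
  "init_state n s \<Delta> r \<alpha> =
     \<lparr> regs = (\<lambda>k. if k = 0 then int n else if k = 1 then int s
                   else if k = 2 then int \<Delta> else if k = 3 then int r else 0),
       arrs = (\<lambda>a i. if a = 0 \<and> 0 \<le> i \<and> i < int n then int (\<alpha> (nat i)) else 0) \<rparr>"

end

theory Submission
  imports Defs
begin

text \<open>On a complete graph every vertex of \<open>D\<close> is adjacent to every vertex outside, so by
  integral transportation a dissolution with \<open>|D| = d\<close> exists iff \<open>d s = (n - d) \<Delta>\<close>, and the
  biased weights \<open>z\<^sub>\<alpha> \<le> z\<close> exist iff the chosen set \<open>R\<close> consists of vertices with
  \<open>\<alpha> v + \<Delta> \<ge> T := \<lfloor>(s + \<Delta>)/2\<rfloor> + 1\<close> whose total deficit \<open>\<Sum>\<^sub>R (T - \<alpha> v)\<close> is covered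
  by the budget \<open>\<Sum>\<^sub>D \<alpha>\<close>. Sorting the vertices by decreasing \<open>\<alpha>\<close>, an exchange argument shows
  that one may take \<open>D \<union> R\<close> to be the \<open>d + r\<close> top-ranked vertices and \<open>R\<close> the last \<open>r\<close>
  qualified ones among them. A RAM program checks this canonical choice: computing all
  ranks costs \<open>O(n\<^sup>2)\<close> steps, everything else is a linear scan.\<close>

section \<open>Ranking vertices by decreasing weight\<close>

definition ranks_before :: "(nat \<Rightarrow> nat) \<Rightarrow> nat \<Rightarrow> nat \<Rightarrow> bool" where
  "ranks_before \<alpha> j i \<longleftrightarrow> \<alpha> i < \<alpha> j \<or> (\<alpha> j = \<alpha> i \<and> j < i)"

definition rank :: "nat \<Rightarrow> (nat \<Rightarrow> nat) \<Rightarrow> nat \<Rightarrow> nat" where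
  "rank n \<alpha> i = card {j. j < n \<and> ranks_before \<alpha> j i}"

definition vertex_of_rank :: "nat \<Rightarrow> (nat \<Rightarrow> nat) \<Rightarrow> nat \<Rightarrow> nat" where
  "vertex_of_rank n \<alpha> = inv_into {..<n} (rank n \<alpha>)"

lemma rank_less: "i < n \<Longrightarrow> rank n \<alpha> i < n"
proof -
  assume "i < n"
  have "{j. j < n \<and> ranks_before \<alpha> j i} \<subseteq> {..<n} - {i}"
    by (auto simp: ranks_before_def)
  then have "rank n \<alpha> i \<le> card ({..<n} - {i})"
    unfolding rank_def by (intro card_mono) auto
  with \<open>i < n\<close> show ?thesis by simp
qed

lemma rank_less_rank: "ranks_before \<alpha> i j \<Longrightarrow> i < n \<Longrightarrow> rank n \<alpha> i < rank n \<alpha> j"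
  unfolding rank_def
  by (intro psubset_card_mono) (auto simp: ranks_before_def)

lemma inj_on_rank: "inj_on (rank n \<alpha>) {..<n}"
proof (rule inj_onI, rule ccontr)
  fix i j assume ij: "i \<in> {..<n}" "j \<in> {..<n}" "rank n \<alpha> i = rank n \<alpha> j" "i \<noteq> j"
  then have "ranks_before \<alpha> i j \<or> ranks_before \<alpha> j i"
    unfolding ranks_before_def by (metis linorder_neqE_nat)
  with ij show False using rank_less_rank[of \<alpha> i j n] rank_less_rank[of \<alpha> j i n] by auto
qed

lemma bij_betw_rank: "bij_betw (rank n \<alpha>) {..<n} {..<n}"
  by (rule bij_betw_imageI[OF inj_on_rank])
     (metis card_image card_subset_eq finite_lessThan image_subsetI inj_on_rank lessThan_iff rank_less)

lemma rank_less_imp_le: "rank n \<alpha> i < rank n \<alpha> j \<Longrightarrow> j < n \<Longrightarrow> \<alpha> j \<le> \<alpha> i"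
  using rank_less_rank[of \<alpha> j i n] by (force simp: ranks_before_def)

lemma vertex_of_rank_less: "p < n \<Longrightarrow> vertex_of_rank n \<alpha> p < n"
  unfolding vertex_of_rank_def using bij_betw_rank[of n \<alpha>]
  by (metis bij_betw_imp_surj_on inv_into_into lessThan_iff)

lemma rank_vertex_of_rank: "p < n \<Longrightarrow> rank n \<alpha> (vertex_of_rank n \<alpha> p) = p"
  unfolding vertex_of_rank_def using bij_betw_rank[of n \<alpha>]
  by (metis bij_betw_inv_into_right lessThan_iff)

lemma vertex_of_rank_rank: "i < n \<Longrightarrow> vertex_of_rank n \<alpha> (rank n \<alpha> i) = i"
  unfolding vertex_of_rank_def using inj_on_rank by (simp add: inv_into_f_f)

lemma vertex_of_rank_antimono:
  assumes "p \<le> p'" "p' < n"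
  shows "\<alpha> (vertex_of_rank n \<alpha> p') \<le> \<alpha> (vertex_of_rank n \<alpha> p)"
proof (cases "p = p'")
  case False
  with assms have "rank n \<alpha> (vertex_of_rank n \<alpha> p) < rank n \<alpha> (vertex_of_rank n \<alpha> p')"
    by (simp add: rank_vertex_of_rank)
  then show ?thesis using rank_less_imp_le vertex_of_rank_less assms(2) by blast
qed simp

lemma bij_betw_rank_preimage:
  "S \<subseteq> {..<n} \<Longrightarrow> bij_betw (rank n \<alpha>) {i. i < n \<and> rank n \<alpha> i \<in> S} S"
proof (rule bij_betw_subset[OF bij_betw_rank])
  assume "S \<subseteq> {..<n}"
  then show "rank n \<alpha> ` {i. i < n \<and> rank n \<alpha> i \<in> S} = S"
    using vertex_of_rank_less[of _ n \<alpha>] rank_vertex_of_rank[of _ n \<alpha>] by (force intro: rev_image_eqI)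
qed auto

lemma card_rank_preimage: "S \<subseteq> {..<n} \<Longrightarrow> card {i. i < n \<and> rank n \<alpha> i \<in> S} = card S"
  using bij_betw_rank_preimage bij_betw_same_card by blast

lemma sum_rank_preimage:
  assumes "S \<subseteq> {..<n}"
  shows "(\<Sum>i | i < n \<and> rank n \<alpha> i \<in> S. f i) = (\<Sum>p\<in>S. f (vertex_of_rank n \<alpha> p))"
proof -
  have "(\<Sum>i | i < n \<and> rank n \<alpha> i \<in> S. f i)
      = (\<Sum>i | i < n \<and> rank n \<alpha> i \<in> S. f (vertex_of_rank n \<alpha> (rank n \<alpha> i)))"
    by (intro sum.cong) (auto simp: vertex_of_rank_rank)
  also have "\<dots> = (\<Sum>p\<in>S. f (vertex_of_rank n \<alpha> p))"
    using sum.reindex_bij_betw[OF bij_betw_rank_preimage[OF assms]] .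
  finally show ?thesis .
qed

lemma sum_rank_image:
  assumes "A \<subseteq> {..<n}"
  shows "(\<Sum>p\<in>rank n \<alpha> ` A. f (vertex_of_rank n \<alpha> p)) = (\<Sum>i\<in>A. f i)"
proof -
  have "inj_on (rank n \<alpha>) A" using inj_on_rank assms inj_on_subset by blast
  then have "(\<Sum>p\<in>rank n \<alpha> ` A. f (vertex_of_rank n \<alpha> p))
      = (\<Sum>i\<in>A. f (vertex_of_rank n \<alpha> (rank n \<alpha> i)))"
    by (simp add: sum.reindex)
  also have "\<dots> = (\<Sum>i\<in>A. f i)" using assms by (intro sum.cong) (auto simp: vertex_of_rank_rank)
  finally show ?thesis .
qed

lemma rank_less_card_iff:
  assumes up: "\<And>i j. P i \<Longrightarrow> \<alpha> i \<le> \<alpha> j \<Longrightarrow> P j" and "i < n"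
  shows "rank n \<alpha> i < card {j. j < n \<and> P j} \<longleftrightarrow> P i"
proof
  assume "P i"
  have "{j. j < n \<and> rank n \<alpha> j \<in> {..rank n \<alpha> i}} \<subseteq> {j. j < n \<and> P j}"
  proof (rule subsetI)
    fix j assume "j \<in> {j. j < n \<and> rank n \<alpha> j \<in> {..rank n \<alpha> i}}"
    then have j: "j < n" "rank n \<alpha> j \<le> rank n \<alpha> i" by auto
    have "P j"
    proof (cases "rank n \<alpha> j = rank n \<alpha> i")
      case True
      with j \<open>i < n\<close> have "j = i" using inj_on_rank by (auto dest: inj_onD)
      with \<open>P i\<close> show ?thesis by simp
    next
      case False
      with j have "\<alpha> i \<le> \<alpha> j" using rank_less_imp_le[of n \<alpha> j i] \<open>i < n\<close> by simp
      with \<open>P i\<close> show ?thesis by (rule up)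
    qed
    with j show "j \<in> {j. j < n \<and> P j}" by simp
  qed
  then have "card {j. j < n \<and> rank n \<alpha> j \<in> {..rank n \<alpha> i}} \<le> card {j. j < n \<and> P j}"
    by (intro card_mono) auto
  moreover have "card {j. j < n \<and> rank n \<alpha> j \<in> {..rank n \<alpha> i}} = Suc (rank n \<alpha> i)"
    using card_rank_preimage[of "{..rank n \<alpha> i}" n \<alpha>] rank_less[OF \<open>i < n\<close>, of \<alpha>] by fastforce
  ultimately show "rank n \<alpha> i < card {j. j < n \<and> P j}" by simp
next
  assume less: "rank n \<alpha> i < card {j. j < n \<and> P j}"
  show "P i"
  proof (rule ccontr)
    assume "\<not> P i"
    have "{j. j < n \<and> P j} \<subseteq> {j. j < n \<and> rank n \<alpha> j \<in> {..<rank n \<alpha> i}}"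
    proof (rule subsetI)
      fix j assume "j \<in> {j. j < n \<and> P j}"
      then have j: "j < n" "P j" by auto
      have "rank n \<alpha> j \<noteq> rank n \<alpha> i"
        using j \<open>i < n\<close> \<open>\<not> P i\<close> inj_on_rank by (auto dest: inj_onD)
      moreover have "\<not> rank n \<alpha> i < rank n \<alpha> j"
        using j \<open>\<not> P i\<close> up[of j i] rank_less_imp_le[of n \<alpha> i j] by auto
      ultimately show "j \<in> {j. j < n \<and> rank n \<alpha> j \<in> {..<rank n \<alpha> i}}" using j by simp
    qed
    then have "card {j. j < n \<and> P j} \<le> card {j. j < n \<and> rank n \<alpha> j \<in> {..<rank n \<alpha> i}}"
      by (intro card_mono) auto
    also have "\<dots> = rank n \<alpha> i"
      using card_rank_preimage[of "{..<rank n \<alpha> i}" n \<alpha>] rank_less[OF \<open>i < n\<close>, of \<alpha>] by fastforce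
    finally show False using less by simp
  qed
qed

section \<open>Exchange arguments\<close>

lemma antimono_sum_le_sum_lessThan:
  fixes u :: "nat \<Rightarrow> 'a::ordered_comm_monoid_add"
  assumes anti: "\<And>p p'. p \<le> p' \<Longrightarrow> p' < m \<Longrightarrow> u p' \<le> u p" and "A \<subseteq> {..<m}"
  shows "sum u A \<le> sum u {..<card A}"
  using assms(2)
proof (induction "card A" arbitrary: A)
  case 0
  then have "finite A" by (meson finite_lessThan finite_subset)
  with 0 show ?case by simp
next
  case (Suc k)
  then have fin: "finite A" and "A \<noteq> {}" by (auto intro: finite_subset)
  define a where "a = Max A"
  have "a \<in> A" "A \<subseteq> {..a}" using fin \<open>A \<noteq> {}\<close> by (auto simp: a_def)
  then have "k \<le> a" and "a < m"
    using Suc card_mono[of "{..a}" A] by auto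
  have "card (A - {a}) = k" using Suc.hyps(2) \<open>a \<in> A\<close> fin by simp
  then have "sum u (A - {a}) \<le> sum u {..<k}"
    using Suc.hyps(1)[of "A - {a}"] Suc.prems by auto
  moreover have "u a \<le> u k" using anti[OF \<open>k \<le> a\<close> \<open>a < m\<close>] .
  ultimately have "u a + sum u (A - {a}) \<le> u k + sum u {..<k}" by (simp add: add_mono)
  then show ?case
    using sum.remove[OF fin \<open>a \<in> A\<close>, of u] Suc.hyps(2)[symmetric] by (simp add: add.commute)
qed

text \<open>In rank order, \<open>b p\<close> is the weight \<open>\<alpha>\<close> and \<open>e p\<close> the deficit \<open>T - \<alpha>\<close> of the vertex of
  rank \<open>p\<close>, so \<open>b + e = max \<alpha> T\<close> decreases. Both lemmas move a feasible pair \<open>(D, R)\<close> to the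
  top ranks, with \<open>R\<close> pushed as far down as the qualified vertices (ranks below \<open>q\<close>) allow.\<close>
lemma exchange_few_qualified:
  fixes b e :: "nat \<Rightarrow> int"
  assumes b_anti: "\<And>p p'. p \<le> p' \<Longrightarrow> p' < n \<Longrightarrow> b p' \<le> b p"
    and be_anti: "\<And>p p'. p \<le> p' \<Longrightarrow> p' < n \<Longrightarrow> b p' + e p' \<le> b p + e p"
    and D: "D \<subseteq> {..<n}" and R: "R \<subseteq> {..<q}" "D \<inter> R = {}"
    and q: "q \<le> n" "q \<le> card D + card R"
    and feasible: "sum e R \<le> sum b D"
  shows "sum e {q - card R..<q} \<le> sum b ({..<card D + card R} - {q - card R..<q})"
proof -
  define I where "I = {q - card R..<q}"
  define h where "h p = b p + e p" for p
  have fin: "finite D" "finite R" using D R by (auto intro: finite_subset)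
  have "card R \<le> q" using card_mono[OF _ R(1)] by simp
  have "D \<union> R \<subseteq> {..<n}" using D R q by auto
  from antimono_sum_le_sum_lessThan[OF b_anti this]
  have top_b: "sum b D + sum b R \<le> sum b {..<card D + card R}"
    using fin R(2) by (simp add: card_Un_disjoint sum.union_disjoint)
  have h_anti: "h p' \<le> h p" if "p \<le> p'" "p' < q" for p p'
    using be_anti that q(1) by (simp add: h_def)
  have "{..<q} - R \<subseteq> {..<q}" by auto
  from antimono_sum_le_sum_lessThan[OF h_anti this]
  have top_h: "sum h ({..<q} - R) \<le> sum h {..<q - card R}"
    using R(1) fin by (simp add: card_Diff_subset)
  have "sum h {..<q} = sum h ({..<q} - R) + sum h R"
    using R(1) by (metis finite_lessThan sum.subset_diff)
  moreover have "{..<q} = {..<q - card R} \<union> I" using \<open>card R \<le> q\<close> by (auto simp: I_def)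
  then have "sum h {..<q} = sum h {..<q - card R} + sum h I"
    by (simp add: sum.union_disjoint ivl_disj_int(2) I_def)
  ultimately have "sum h I \<le> sum h R" using top_h by simp
  then have "sum b I + sum e I \<le> sum b R + sum e R" by (simp add: h_def sum.distrib)
  moreover have "sum b ({..<card D + card R} - I) = sum b {..<card D + card R} - sum b I"
    using q(2) by (intro sum_diff) (auto simp: I_def)
  ultimately show ?thesis using top_b feasible by (simp add: I_def[symmetric])
qed

lemma exchange_many_qualified:
  fixes b e :: "nat \<Rightarrow> int"
  assumes e_mono: "\<And>p p'. p \<le> p' \<Longrightarrow> p' < n \<Longrightarrow> e p \<le> e p'"
    and be_anti: "\<And>p p'. p \<le> p' \<Longrightarrow> p' < n \<Longrightarrow> b p' + e p' \<le> b p + e p"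
    and DR: "D \<subseteq> {..<n}" "R \<subseteq> {..<n}" "D \<inter> R = {}"
    and feasible: "sum e R \<le> sum b D"
  shows "sum e {card D..<card D + card R} \<le> sum b {..<card D}"
proof -
  have fin: "finite D" "finite R" using DR by (auto intro: finite_subset)
  have neg_e_anti: "- e p' \<le> - e p" if "p \<le> p'" "p' < n" for p p'
    using e_mono[OF that] by simp
  have "D \<union> R \<subseteq> {..<n}" using DR by auto
  from antimono_sum_le_sum_lessThan[of n "\<lambda>p. - e p", OF neg_e_anti this]
  have top_e: "sum e {..<card D + card R} \<le> sum e D + sum e R"
    using fin DR(3) by (simp add: card_Un_disjoint sum.union_disjoint sum_negf)
  from antimono_sum_le_sum_lessThan[OF be_anti DR(1)]
  have top_be: "sum b D + sum e D \<le> sum b {..<card D} + sum e {..<card D}"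
    by (simp add: sum.distrib)
  have "{..<card D + card R} = {..<card D} \<union> {card D..<card D + card R}" by auto
  then have "sum e {..<card D + card R} = sum e {..<card D} + sum e {card D..<card D + card R}"
    by (simp add: sum.union_disjoint ivl_disj_int(2))
  with top_e top_be feasible show ?thesis by simp
qed

lemma exchange_to_canonical:
  fixes b :: "nat \<Rightarrow> nat"
  assumes anti: "\<And>p p'. p \<le> p' \<Longrightarrow> p' < n \<Longrightarrow> b p' \<le> b p"
    and DR: "D \<subseteq> {..<n}" "R \<subseteq> {..<k}" "D \<inter> R = {}" "k \<le> n"
    and feasible: "(\<Sum>p\<in>R. T - b p) \<le> (\<Sum>p\<in>D. b p)"
  defines "q \<equiv> min (card D + card R) k"
  shows "(\<Sum>p\<in>{q - card R..<q}. T - b p) \<le> (\<Sum>p\<in>{..<card D + card R} - {q - card R..<q}. b p)"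
proof -
  define e where "e p = int (T - b p)" for p
  have as_int: "(\<Sum>p\<in>I. T - b p) \<le> (\<Sum>p\<in>J. b p) \<longleftrightarrow> sum e I \<le> (\<Sum>p\<in>J. int (b p))" for I J
    unfolding e_def by (simp flip: of_nat_sum)
  have b_anti: "int (b p') \<le> int (b p)" and e_mono: "e p \<le> e p'"
    and be_anti: "int (b p') + e p' \<le> int (b p) + e p" if "p \<le> p'" "p' < n" for p p'
    using anti[OF that] by (auto simp: e_def)
  show ?thesis
  proof (cases "k \<le> card D + card R")
    case True
    then show ?thesis
      using exchange_few_qualified[OF b_anti be_anti DR(1,2,3,4) True] feasible
      by (simp add: q_def as_int)
  next
    case False
    have "{..<card D + card R} - {card D..<card D + card R} = {..<card D}" by auto
    with False show ?thesis
      using exchange_many_qualified[OF e_mono be_anti DR(1) _ DR(3)] DR(2,4) feasible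
      by (fastforce simp: q_def as_int)
  qed
qed

section \<open>Integral transportation and complete graphs\<close>

lemma ex_le_with_sum:
  fixes b :: "'a \<Rightarrow> nat"
  assumes "finite B" "k \<le> sum b B"
  shows "\<exists>b'. (\<forall>y. b' y \<le> b y) \<and> sum b' B = k"
  using assms
proof (induction B arbitrary: k rule: finite_induct)
  case empty
  then show ?case by (intro exI[of _ "\<lambda>_. 0"]) auto
next
  case (insert x B)
  show ?case
  proof (cases "k \<le> sum b B")
    case True
    then obtain b' where b': "\<forall>y. b' y \<le> b y" "sum b' B = k" using insert by blast
    have "sum (b'(x := 0)) B = sum b' B" using insert(2) by (intro sum.cong) auto
    with b' insert(1,2) show ?thesis by (intro exI[of _ "b'(x := 0)"]) auto
  next
    case False
    have "sum (b(x := k - sum b B)) B = sum b B" using insert(2) by (intro sum.cong) auto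
    with False insert show ?thesis by (intro exI[of _ "b(x := k - sum b B)"]) auto
  qed
qed

lemma ex_matrix_with_margins:
  fixes a :: "'a \<Rightarrow> nat" and b :: "'b \<Rightarrow> nat"
  assumes "finite A" "finite B" "sum a A = sum b B"
  shows "\<exists>M. (\<forall>x\<in>A. (\<Sum>y\<in>B. M (x, y)) = a x) \<and> (\<forall>y\<in>B. (\<Sum>x\<in>A. M (x, y)) = b y)"
  using assms
proof (induction A arbitrary: b rule: finite_induct)
  case empty
  then show ?case by (intro exI[of _ "\<lambda>_. 0"]) auto
next
  case (insert x A)
  then obtain b' where b': "\<forall>y. b' y \<le> b y" "sum b' B = a x"
    using ex_le_with_sum[of B "a x" b] by auto
  have "sum (\<lambda>y. b y - b' y) B = sum b B - sum b' B"
    using b'(1) by (simp add: sum_subtractf_nat)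
  then have "sum a A = sum (\<lambda>y. b y - b' y) B" using insert b' by simp
  then obtain M where M: "\<forall>x\<in>A. (\<Sum>y\<in>B. M (x, y)) = a x"
      "\<forall>y\<in>B. (\<Sum>x\<in>A. M (x, y)) = b y - b' y"
    using insert by blast
  define M' where "M' = (\<lambda>(x', y). if x' = x then b' y else M (x', y))"
  have "(\<Sum>x'\<in>A. M' (x', y)) = (\<Sum>x'\<in>A. M (x', y))" for y
    using insert(2) unfolding M'_def by (intro sum.cong) auto
  then have "\<forall>y\<in>B. (\<Sum>x'\<in>insert x A. M' (x', y)) = b y"
    using insert(1,2) M(2) b'(1) by (simp add: M'_def)
  moreover have "(\<Sum>y\<in>B. M' (x', y)) = a x'" if "x' \<in> insert x A" for x'
    using that M(1) b'(2) by (cases "x' = x") (auto simp: M'_def)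
  ultimately show ?case by blast
qed

lemma Zset_complete_edges:
  assumes "D \<subseteq> {0..<n}"
  shows "Zset D {0..<n} (complete_edges n) = D \<times> ({0..<n} - D)"
proof -
  have "{x, y} \<in> complete_edges n \<longleftrightarrow> x < n \<and> y < n \<and> x \<noteq> y" for x y
    unfolding complete_edges_def by (auto simp: doubleton_eq_iff)
  with assms show ?thesis unfolding Zset_def by auto
qed

lemma sum_Times_fst_eq:
  "x \<in> A \<Longrightarrow> sum f {p \<in> A \<times> B. fst p = x} = (\<Sum>y\<in>B. f (x, y))"
  by (rule sum.reindex_cong[of "Pair x"]) (auto simp: inj_on_def)

lemma sum_Times_snd_eq:
  "y \<in> B \<Longrightarrow> sum f {p \<in> A \<times> B. snd p = y} = (\<Sum>x\<in>A. f (x, y))"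
  by (rule sum.reindex_cong[of "\<lambda>x. (x, y)"]) (auto simp: inj_on_def)

section \<open>Biased dissolutions of complete graphs\<close>

definition threshold :: "nat \<Rightarrow> nat \<Rightarrow> nat" where
  "threshold s \<Delta> = (s + \<Delta>) div 2 + 1"

lemma half_less_iff_threshold_le: "real (s + \<Delta>) / 2 < real m \<longleftrightarrow> threshold s \<Delta> \<le> m"
proof -
  have "real (s + \<Delta>) / 2 < real m \<longleftrightarrow> s + \<Delta> < 2 * m" by (auto simp: field_simps)
  also have "\<dots> \<longleftrightarrow> threshold s \<Delta> \<le> m" unfolding threshold_def by presburger
  finally show ?thesis .
qed

text \<open>What is left of a biased dissolution of a complete graph once the edge weights are
  forgotten; the weights can always be recovered by integral transportation.\<close>
definition biased_certificate ::
  "nat \<Rightarrow> nat \<Rightarrow> nat \<Rightarrow> nat \<Rightarrow> (nat \<Rightarrow> nat) \<Rightarrow> nat set \<Rightarrow> nat set \<Rightarrow> bool" where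
  "biased_certificate n s \<Delta> r \<alpha> D R \<longleftrightarrow>
     D \<subset> {0..<n} \<and> card D * s = card ({0..<n} - D) * \<Delta> \<and>
     R \<subseteq> {0..<n} - D \<and> card R = r \<and>
     (\<forall>v\<in>R. threshold s \<Delta> \<le> \<alpha> v + \<Delta>) \<and>
     (\<Sum>v\<in>R. threshold s \<Delta> - \<alpha> v) \<le> (\<Sum>v\<in>D. \<alpha> v)"

lemma biased_dissolution_imp_certificate:
  assumes bd: "biased_dissolution {0..<n} (complete_edges n) s \<Delta> r \<alpha> D z z\<^sub>\<alpha> R"
  shows "biased_certificate n s \<Delta> r \<alpha> D R"
proof -
  define B where "B = {0..<n} - D"
  have DV: "D \<subset> {0..<n}" using bd by (simp add: biased_dissolution_def dissolution_def)
  then have fin: "finite D" "finite B" by (auto simp: B_def intro: finite_subset)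
  have Z: "Zset D {0..<n} (complete_edges n) = D \<times> B"
    using Zset_complete_edges[of D n] DV by (auto simp: B_def)
  note bd = bd[unfolded biased_dissolution_def dissolution_def Z, folded B_def]
  have rows: "(\<Sum>y\<in>B. z (x, y)) = s" and rows\<^sub>\<alpha>: "(\<Sum>y\<in>B. z\<^sub>\<alpha> (x, y)) = \<alpha> x"
    if "x \<in> D" for x
    using bd that by (simp_all add: sum_Times_fst_eq)
  have cols: "(\<Sum>x\<in>D. z (x, y)) = \<Delta>" if "y \<in> B" for y
    using bd that by (simp add: sum_Times_snd_eq)
  have RB: "R \<subseteq> B" and "card R = r" and z\<^sub>\<alpha>_le: "\<forall>x\<in>D. \<forall>y\<in>B. z\<^sub>\<alpha> (x, y) \<le> z (x, y)"
    using bd by auto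
  have bias: "real (s + \<Delta>) / 2 < real (\<alpha> y + (\<Sum>x\<in>D. z\<^sub>\<alpha> (x, y)))" if "y \<in> R" for y
  proof -
    have "y \<in> B" using that RB by auto
    moreover have "real (s + \<Delta>) / 2 < real (\<alpha> y + sum z\<^sub>\<alpha> {p \<in> D \<times> B. snd p = y})"
      using bd that by blast
    ultimately show ?thesis by (simp only: sum_Times_snd_eq)
  qed
  have "card D * s = (\<Sum>x\<in>D. \<Sum>y\<in>B. z (x, y))" using rows by simp
  also have "\<dots> = (\<Sum>y\<in>B. \<Sum>x\<in>D. z (x, y))" by (rule sum.swap)
  also have "\<dots> = card B * \<Delta>" using cols by simp
  finally have balance: "card D * s = card B * \<Delta>" .
  define c where "c y = (\<Sum>x\<in>D. z\<^sub>\<alpha> (x, y))" for y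
  have "c y \<le> \<Delta>" if "y \<in> B" for y
    using sum_mono[of D "\<lambda>x. z\<^sub>\<alpha> (x, y)" "\<lambda>x. z (x, y)"] z\<^sub>\<alpha>_le cols that by (simp add: c_def)
  moreover have need: "threshold s \<Delta> \<le> \<alpha> v + c v" if "v \<in> R" for v
    using bias[OF that] unfolding c_def half_less_iff_threshold_le .
  ultimately have R_qualified: "\<forall>v\<in>R. threshold s \<Delta> \<le> \<alpha> v + \<Delta>" using RB by fastforce
  have "(\<Sum>v\<in>R. threshold s \<Delta> - \<alpha> v) \<le> (\<Sum>v\<in>R. c v)"
    using need by (intro sum_mono) (simp add: le_diff_conv add.commute)
  also have "\<dots> \<le> (\<Sum>v\<in>B. c v)" using RB fin by (intro sum_mono2) auto
  also have "\<dots> = (\<Sum>x\<in>D. \<Sum>y\<in>B. z\<^sub>\<alpha> (x, y))" unfolding c_def by (rule sum.swap)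
  also have "\<dots> = (\<Sum>x\<in>D. \<alpha> x)" using rows\<^sub>\<alpha> by simp
  finally show ?thesis
    using DV balance RB \<open>card R = r\<close> R_qualified by (simp add: biased_certificate_def B_def)
qed

lemma ex_column_loads:
  fixes \<alpha> :: "'a \<Rightarrow> nat"
  assumes "finite B" "R \<subseteq> B" "\<forall>v\<in>R. T \<le> \<alpha> v + \<Delta>"
    and "(\<Sum>v\<in>R. T - \<alpha> v) \<le> budget" "budget \<le> card B * \<Delta>"
  shows "\<exists>c. (\<forall>v\<in>B. c v \<le> \<Delta>) \<and> sum c B = budget \<and> (\<forall>v\<in>R. T \<le> \<alpha> v + c v)"
proof -
  define need where "need v = (if v \<in> R then T - \<alpha> v else 0)" for v
  have need_le: "need v \<le> \<Delta>" for v using assms(3) by (auto simp: need_def)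
  have "sum need B = (\<Sum>v\<in>R. T - \<alpha> v)"
    using assms(1,2) by (simp add: need_def sum.If_cases Int_absorb1)
  moreover have "(\<Sum>v\<in>B. \<Delta> - need v) + sum need B = card B * \<Delta>"
    using need_le by (simp flip: sum.distrib)
  ultimately have "budget - sum need B \<le> (\<Sum>v\<in>B. \<Delta> - need v)" using assms(4,5) by linarith
  then obtain extra where extra: "\<forall>v. extra v \<le> \<Delta> - need v" "sum extra B = budget - sum need B"
    using ex_le_with_sum[OF assms(1)] by blast
  show ?thesis
  proof (intro exI conjI ballI)
    show "need v + extra v \<le> \<Delta>" for v using extra(1) need_le[of v] by (metis le_diff_conv2 add.commute)
    show "(\<Sum>v\<in>B. need v + extra v) = budget"
      using extra(2) \<open>sum need B = _\<close> assms(4) by (simp add: sum.distrib)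
    show "T \<le> \<alpha> v + (need v + extra v)" if "v \<in> R" for v using that by (simp add: need_def)
  qed
qed

lemma certificate_imp_biased_dissolution:
  assumes cert: "biased_certificate n s \<Delta> r \<alpha> D R" and \<alpha>_le: "\<forall>v\<in>D. \<alpha> v \<le> s"
  shows "\<exists>z z\<^sub>\<alpha>. biased_dissolution {0..<n} (complete_edges n) s \<Delta> r \<alpha> D z z\<^sub>\<alpha> R"
proof -
  define B where "B = {0..<n} - D"
  have DV: "D \<subset> {0..<n}" and balance: "card D * s = card B * \<Delta>" and RB: "R \<subseteq> B"
    using cert by (auto simp: biased_certificate_def B_def)
  then have fin: "finite D" "finite B" by (auto simp: B_def intro: finite_subset)
  have Z: "Zset D {0..<n} (complete_edges n) = D \<times> B"
    using Zset_complete_edges[of D n] DV by (auto simp: B_def)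
  have "(\<Sum>v\<in>D. \<alpha> v) \<le> card B * \<Delta>"
    using sum_bounded_above[of D \<alpha> s] \<alpha>_le balance by simp
  then obtain c where c: "\<forall>v\<in>B. c v \<le> \<Delta>" "sum c B = (\<Sum>v\<in>D. \<alpha> v)"
      "\<forall>v\<in>R. threshold s \<Delta> \<le> \<alpha> v + c v"
    using ex_column_loads[OF fin(2) RB, of "threshold s \<Delta>" \<alpha> \<Delta> "\<Sum>v\<in>D. \<alpha> v"] cert
    by (auto simp: biased_certificate_def)
  obtain M\<^sub>\<alpha> where M\<^sub>\<alpha>: "\<forall>x\<in>D. (\<Sum>y\<in>B. M\<^sub>\<alpha> (x, y)) = \<alpha> x" "\<forall>y\<in>B. (\<Sum>x\<in>D. M\<^sub>\<alpha> (x, y)) = c y"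
    using ex_matrix_with_margins[OF fin, of \<alpha> c] c(2) by metis
  have "(\<Sum>x\<in>D. s - \<alpha> x) + (\<Sum>v\<in>D. \<alpha> v) = card D * s"
    using \<alpha>_le by (simp flip: sum.distrib)
  moreover have "(\<Sum>y\<in>B. \<Delta> - c y) + (\<Sum>v\<in>D. \<alpha> v) = card B * \<Delta>"
    using c(1) by (simp flip: c(2) sum.distrib)
  ultimately obtain M where M: "\<forall>x\<in>D. (\<Sum>y\<in>B. M (x, y)) = s - \<alpha> x"
      "\<forall>y\<in>B. (\<Sum>x\<in>D. M (x, y)) = \<Delta> - c y"
    using ex_matrix_with_margins[OF fin, of "\<lambda>x. s - \<alpha> x" "\<lambda>y. \<Delta> - c y"] balance by auto
  define z where "z p = M\<^sub>\<alpha> p + M p" for p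
  have rows: "(\<Sum>y\<in>B. z (x, y)) = s" if "x \<in> D" for x
    using M\<^sub>\<alpha>(1) M(1) that \<alpha>_le by (simp add: z_def sum.distrib)
  have cols: "(\<Sum>x\<in>D. z (x, y)) = \<Delta>" if "y \<in> B" for y
    using M\<^sub>\<alpha>(2) M(2) that c(1) by (simp add: z_def sum.distrib)
  have z_le: "z (x, y) \<le> s" if "x \<in> D" "y \<in> B" for x y
    using member_le_sum[of y B "\<lambda>y. z (x, y)"] fin that rows by simp
  have "biased_dissolution {0..<n} (complete_edges n) s \<Delta> r \<alpha> D z M\<^sub>\<alpha> R"
    unfolding biased_dissolution_def dissolution_def Z B_def[symmetric]
  proof (intro conjI ballI)
    show "z p \<le> s" "M\<^sub>\<alpha> p \<le> z p" "M\<^sub>\<alpha> p \<le> s" if "p \<in> D \<times> B" for p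
      using that z_le by (force simp: z_def)+
    show "sum z {p \<in> D \<times> B. fst p = x} = s" "sum M\<^sub>\<alpha> {p \<in> D \<times> B. fst p = x} = \<alpha> x"
      if "x \<in> D" for x
      using that rows M\<^sub>\<alpha>(1) by (simp_all add: sum_Times_fst_eq)
    show "sum z {p \<in> D \<times> B. snd p = y} = \<Delta>" if "y \<in> B" for y
      using that cols by (simp add: sum_Times_snd_eq)
    show "real (s + \<Delta>) / 2 < real (\<alpha> v + sum M\<^sub>\<alpha> {p \<in> D \<times> B. snd p = v})" if "v \<in> R" for v
    proof -
      have "v \<in> B" using that RB by auto
      then show ?thesis
        using that c(3) M\<^sub>\<alpha>(2) by (simp only: sum_Times_snd_eq half_less_iff_threshold_le)
    qed
  qed (use DV RB cert in \<open>auto simp: biased_certificate_def\<close>)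
  then show ?thesis by blast
qed

lemma Biased_Dissolution_complete_edges_iff_certificate:
  assumes "\<forall>v<n. \<alpha> v \<le> s"
  shows "Biased_Dissolution {0..<n} (complete_edges n) s \<Delta> r \<alpha> \<longleftrightarrow>
    (\<exists>D R. biased_certificate n s \<Delta> r \<alpha> D R)"
proof
  assume "Biased_Dissolution {0..<n} (complete_edges n) s \<Delta> r \<alpha>"
  then show "\<exists>D R. biased_certificate n s \<Delta> r \<alpha> D R"
    unfolding Biased_Dissolution_def by (blast intro: biased_dissolution_imp_certificate)
next
  assume "\<exists>D R. biased_certificate n s \<Delta> r \<alpha> D R"
  then obtain D R where cert: "biased_certificate n s \<Delta> r \<alpha> D R" by blast
  then have "\<forall>v\<in>D. \<alpha> v \<le> s" using assms by (auto simp: biased_certificate_def)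
  with cert show "Biased_Dissolution {0..<n} (complete_edges n) s \<Delta> r \<alpha>"
    unfolding Biased_Dissolution_def by (blast dest: certificate_imp_biased_dissolution)
qed

section \<open>The canonical choice of \<open>D\<close> and \<open>R\<close>\<close>

definition dissolved_count :: "nat \<Rightarrow> nat \<Rightarrow> nat \<Rightarrow> nat" where
  "dissolved_count n s \<Delta> = n * \<Delta> div (s + \<Delta>)"

definition qualified_count :: "nat \<Rightarrow> nat \<Rightarrow> nat \<Rightarrow> (nat \<Rightarrow> nat) \<Rightarrow> nat" where
  "qualified_count n s \<Delta> \<alpha> = card {i. i < n \<and> threshold s \<Delta> \<le> \<alpha> i + \<Delta>}"

text \<open>The canonical \<open>D \<union> R\<close> is formed by the
  \<open>d + r\<close> top-ranked vertices, and \<open>R\<close> by the last \<open>r\<close> of them that are still qualified,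
  i.e.\ of rank below \<open>qualified_count\<close>.\<close>
definition canonical_end :: "nat \<Rightarrow> nat \<Rightarrow> nat \<Rightarrow> nat \<Rightarrow> (nat \<Rightarrow> nat) \<Rightarrow> nat" where
  "canonical_end n s \<Delta> r \<alpha> = min (dissolved_count n s \<Delta> + r) (qualified_count n s \<Delta> \<alpha>)"

definition canonical_R :: "nat \<Rightarrow> nat \<Rightarrow> nat \<Rightarrow> nat \<Rightarrow> (nat \<Rightarrow> nat) \<Rightarrow> nat set" where
  "canonical_R n s \<Delta> r \<alpha> =
     {i. i < n \<and> rank n \<alpha> i \<in> {canonical_end n s \<Delta> r \<alpha> - r..<canonical_end n s \<Delta> r \<alpha>}}"

definition canonical_D :: "nat \<Rightarrow> nat \<Rightarrow> nat \<Rightarrow> nat \<Rightarrow> (nat \<Rightarrow> nat) \<Rightarrow> nat set" where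
  "canonical_D n s \<Delta> r \<alpha> =
     {i. i < n \<and> rank n \<alpha> i \<in> {..<dissolved_count n s \<Delta> + r} -
                              {canonical_end n s \<Delta> r \<alpha> - r..<canonical_end n s \<Delta> r \<alpha>}}"

definition canonical_test :: "nat \<Rightarrow> nat \<Rightarrow> nat \<Rightarrow> nat \<Rightarrow> (nat \<Rightarrow> nat) \<Rightarrow> bool" where
  "canonical_test n s \<Delta> r \<alpha> \<longleftrightarrow>
     n * \<Delta> mod (s + \<Delta>) = 0 \<and> 0 < dissolved_count n s \<Delta> \<and> dissolved_count n s \<Delta> + r \<le> n \<and>
     r \<le> canonical_end n s \<Delta> r \<alpha> \<and>
     (\<Sum>v\<in>canonical_R n s \<Delta> r \<alpha>. threshold s \<Delta> - \<alpha> v) \<le> (\<Sum>v\<in>canonical_D n s \<Delta> r \<alpha>. \<alpha> v)"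

lemma rank_less_qualified_count_iff:
  "i < n \<Longrightarrow> rank n \<alpha> i < qualified_count n s \<Delta> \<alpha> \<longleftrightarrow> threshold s \<Delta> \<le> \<alpha> i + \<Delta>"
  unfolding qualified_count_def by (rule rank_less_card_iff) auto

lemma certificate_counts:
  assumes cert: "biased_certificate n s \<Delta> r \<alpha> D R" and "0 < \<Delta>"
  shows "n * \<Delta> mod (s + \<Delta>) = 0" and "card D = dissolved_count n s \<Delta>"
    and "0 < dissolved_count n s \<Delta>" and "dissolved_count n s \<Delta> + r \<le> n"
proof -
  have DV: "D \<subset> {0..<n}" and RV: "R \<subseteq> {0..<n} - D" and "card R = r"
    and balance: "card D * s = card ({0..<n} - D) * \<Delta>"
    using cert by (auto simp: biased_certificate_def)
  moreover have "card ({0..<n} - D) = n - card D" "card D \<le> n"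
    using DV by (auto simp: card_Diff_subset finite_subset intro: card_mono[of "{0..<n}", simplified])
  ultimately have card_eq: "card D * (s + \<Delta>) = n * \<Delta>" by (simp add: algebra_simps diff_mult_distrib)
  then show "n * \<Delta> mod (s + \<Delta>) = 0" by (metis mod_mult_self1_is_0 mult.commute)
  show "card D = dissolved_count n s \<Delta>"
    using \<open>0 < \<Delta>\<close> by (simp add: dissolved_count_def flip: card_eq)
  have "D \<noteq> {}" "finite D" using card_eq DV \<open>0 < \<Delta>\<close> by (auto intro: finite_subset)
  then show "0 < dissolved_count n s \<Delta>"
    using \<open>card D = _\<close> by (metis card_gt_0_iff)
  have "card (D \<union> R) \<le> n" using DV RV by (intro card_mono[of "{0..<n}", simplified]) auto
  moreover have "card (D \<union> R) = card D + card R"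
    using DV RV \<open>finite D\<close> by (intro card_Un_disjoint) (auto intro: finite_subset)
  ultimately show "dissolved_count n s \<Delta> + r \<le> n" using \<open>card D = _\<close> \<open>card R = r\<close> by simp
qed

lemma certificate_imp_canonical_test:
  assumes cert: "biased_certificate n s \<Delta> r \<alpha> D R" and "0 < \<Delta>"
  shows "canonical_test n s \<Delta> r \<alpha>"
proof -
  define d q where "d = dissolved_count n s \<Delta>" and "q = canonical_end n s \<Delta> r \<alpha>"
  have RV: "R \<subseteq> {0..<n} - D" and "card R = r" and sub: "D \<subseteq> {..<n}" "R \<subseteq> {..<n}"
    and R_qualified: "\<forall>v\<in>R. threshold s \<Delta> \<le> \<alpha> v + \<Delta>"
    and feasible: "(\<Sum>v\<in>R. threshold s \<Delta> - \<alpha> v) \<le> (\<Sum>v\<in>D. \<alpha> v)"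
    using cert by (auto simp: biased_certificate_def)
  note counts = certificate_counts[OF cert \<open>0 < \<Delta>\<close>, folded d_def]
  define b where "b p = \<alpha> (vertex_of_rank n \<alpha> p)" for p
  have "inj_on (rank n \<alpha>) (D \<union> R)" using sub by (intro inj_on_subset[OF inj_on_rank]) auto
  then have card_img: "card (rank n \<alpha> ` D) = d" "card (rank n \<alpha> ` R) = r"
    and disj: "rank n \<alpha> ` D \<inter> rank n \<alpha> ` R = {}"
    using counts(2) \<open>card R = r\<close> RV
    by (auto simp: card_image inj_on_Un inj_on_image_Int)
  have R_ranks: "rank n \<alpha> ` R \<subseteq> {..<qualified_count n s \<Delta> \<alpha>}"
    using R_qualified sub by (auto simp: rank_less_qualified_count_iff)
  have "qualified_count n s \<Delta> \<alpha> \<le> n"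
    unfolding qualified_count_def by (rule order_trans[OF card_mono[of "{..<n}"]]) auto
  moreover have "rank n \<alpha> ` D \<subseteq> {..<n}" using sub rank_less by auto
  moreover have "(\<Sum>p\<in>rank n \<alpha> ` R. threshold s \<Delta> - b p) \<le> (\<Sum>p\<in>rank n \<alpha> ` D. b p)"
    using feasible sum_rank_image[OF sub(2), of "\<lambda>i. threshold s \<Delta> - \<alpha> i" \<alpha>]
      sum_rank_image[OF sub(1), of \<alpha> \<alpha>] by (simp add: b_def)
  moreover have "b p' \<le> b p" if "p \<le> p'" "p' < n" for p p'
    using vertex_of_rank_antimono[OF that] by (simp add: b_def)
  ultimately have "(\<Sum>p\<in>{q - r..<q}. threshold s \<Delta> - b p) \<le> (\<Sum>p\<in>{..<d + r} - {q - r..<q}. b p)"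
    using exchange_to_canonical[of n b, OF _ _ R_ranks disj] card_img
    by (simp add: q_def d_def canonical_end_def)
  moreover have "r \<le> q"
    using card_mono[OF _ R_ranks] card_img by (simp add: q_def canonical_end_def d_def)
  moreover have "{q - r..<q} \<subseteq> {..<n}" "{..<d + r} - {q - r..<q} \<subseteq> {..<n}"
    using counts(4) by (auto simp: q_def canonical_end_def d_def)
  ultimately show ?thesis
    using counts(1,3,4)
      sum_rank_preimage[of "{q - r..<q}" n "\<lambda>i. threshold s \<Delta> - \<alpha> i" \<alpha>]
      sum_rank_preimage[of "{..<d + r} - {q - r..<q}" n \<alpha> \<alpha>]
    by (simp add: canonical_test_def canonical_R_def canonical_D_def b_def flip: d_def q_def)
qed

lemma canonical_test_imp_certificate:
  assumes test: "canonical_test n s \<Delta> r \<alpha>" and "0 < s"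
  shows "biased_certificate n s \<Delta> r \<alpha> (canonical_D n s \<Delta> r \<alpha>) (canonical_R n s \<Delta> r \<alpha>)"
proof -
  define d q where "d = dissolved_count n s \<Delta>" and "q = canonical_end n s \<Delta> r \<alpha>"
  define D R where "D = canonical_D n s \<Delta> r \<alpha>" and "R = canonical_R n s \<Delta> r \<alpha>"
  have "0 < d" "d + r \<le> n" "r \<le> q" and "n * \<Delta> mod (s + \<Delta>) = 0"
    using test by (simp_all add: canonical_test_def d_def q_def)
  then have eq: "d * (s + \<Delta>) = n * \<Delta>"
    by (metis d_def dissolved_count_def add_0_right mult.commute mult_div_mod_eq)
  have "q \<le> d + r" by (simp add: q_def d_def canonical_end_def)
  then have I: "{q - r..<q} \<subseteq> {..<n}" "{..<d + r} - {q - r..<q} \<subseteq> {..<n}"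
    using \<open>d + r \<le> n\<close> by auto
  have "card ({..<d + r} - {q - r..<q}) = d"
    using \<open>q \<le> d + r\<close> \<open>r \<le> q\<close> by (subst card_Diff_subset) auto
  then have "card D = d"
    using card_rank_preimage[OF I(2)] by (simp add: D_def canonical_D_def flip: d_def q_def)
  have "card R = r"
    using card_rank_preimage[OF I(1)] \<open>r \<le> q\<close> by (simp add: R_def canonical_R_def flip: q_def)
  have "d < n"
  proof -
    have "0 < n" using \<open>0 < d\<close> \<open>d + r \<le> n\<close> by simp
    then have "d * (s + \<Delta>) < n * (s + \<Delta>)" using eq \<open>0 < s\<close> by simp
    then show ?thesis by simp
  qed
  have "D \<subseteq> {0..<n}" by (auto simp: D_def canonical_D_def)
  then have "card ({0..<n} - D) = n - d" using \<open>card D = d\<close> by (simp add: card_Diff_subset finite_subset)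
  then have "card D * s = card ({0..<n} - D) * \<Delta>"
    using eq \<open>card D = d\<close> \<open>d < n\<close> by (simp add: diff_mult_distrib algebra_simps)
  moreover have "D \<subset> {0..<n}" using \<open>D \<subseteq> {0..<n}\<close> \<open>card D = d\<close> \<open>d < n\<close> by auto
  moreover have "R \<subseteq> {0..<n} - D" by (auto simp: D_def R_def canonical_D_def canonical_R_def)
  moreover have "threshold s \<Delta> \<le> \<alpha> v + \<Delta>" if "v \<in> R" for v
    using that rank_less_qualified_count_iff[of v n \<alpha> s \<Delta>]
    by (auto simp: R_def canonical_R_def canonical_end_def)
  ultimately show ?thesis
    using test \<open>card R = r\<close> by (simp add: biased_certificate_def canonical_test_def D_def R_def)
qed

lemma Biased_Dissolution_complete_edges_iff_canonical_test:
  assumes "0 < s" "0 < \<Delta>" "\<forall>v<n. \<alpha> v \<le> s"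
  shows "Biased_Dissolution {0..<n} (complete_edges n) s \<Delta> r \<alpha> \<longleftrightarrow> canonical_test n s \<Delta> r \<alpha>"
  using Biased_Dissolution_complete_edges_iff_certificate[OF assms(3)] assms(1,2)
    certificate_imp_canonical_test canonical_test_imp_certificate by blast

section \<open>Cost-bounded execution on the RAM\<close>

fun loop_free :: "com \<Rightarrow> bool" where
  "loop_free (Seq c\<^sub>1 c\<^sub>2) \<longleftrightarrow> loop_free c\<^sub>1 \<and> loop_free c\<^sub>2"
| "loop_free (If b c\<^sub>1 c\<^sub>2) \<longleftrightarrow> loop_free c\<^sub>1 \<and> loop_free c\<^sub>2"
| "loop_free (While b c) \<longleftrightarrow> False"
| "loop_free _ \<longleftrightarrow> True"

fun straight_run :: "com \<Rightarrow> state \<Rightarrow> state" where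
  "straight_run SKIP st = st"
| "straight_run (Assign k e) st = st\<lparr>regs := (regs st)(k := aval e st)\<rparr>"
| "straight_run (ArrAssign a i e) st =
     st\<lparr>arrs := (arrs st)(a := (arrs st a)(aval i st := aval e st))\<rparr>"
| "straight_run (Seq c\<^sub>1 c\<^sub>2) st = straight_run c\<^sub>2 (straight_run c\<^sub>1 st)"
| "straight_run (If b c\<^sub>1 c\<^sub>2) st = (if bval b st then straight_run c\<^sub>1 st else straight_run c\<^sub>2 st)"
| "straight_run (While b c) st = st"

fun step_bound :: "com \<Rightarrow> nat" where
  "step_bound (Seq c\<^sub>1 c\<^sub>2) = step_bound c\<^sub>1 + step_bound c\<^sub>2"
| "step_bound (If b c\<^sub>1 c\<^sub>2) = max (step_bound c\<^sub>1) (step_bound c\<^sub>2) + 1"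
| "step_bound _ = 1"

lemma exec_straight_run:
  "loop_free c \<Longrightarrow> \<exists>t. exec c st t (straight_run c st) \<and> t \<le> step_bound c"
proof (induction c arbitrary: st)
  case (Seq c\<^sub>1 c\<^sub>2)
  then obtain t\<^sub>1 t\<^sub>2 where "exec c\<^sub>1 st t\<^sub>1 (straight_run c\<^sub>1 st)" "t\<^sub>1 \<le> step_bound c\<^sub>1"
    and "exec c\<^sub>2 (straight_run c\<^sub>1 st) t\<^sub>2 (straight_run c\<^sub>2 (straight_run c\<^sub>1 st))" "t\<^sub>2 \<le> step_bound c\<^sub>2"
    by fastforce
  then show ?case by (auto intro!: exI[of _ "t\<^sub>1 + t\<^sub>2"] exec.Seq)
next
  case (If b c\<^sub>1 c\<^sub>2)
  then show ?case
    by (cases "bval b st") (fastforce intro: exec.IfT exec.IfF)+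
qed (auto intro: exec.intros)

definition runs_within :: "com \<Rightarrow> state \<Rightarrow> nat \<Rightarrow> (state \<Rightarrow> bool) \<Rightarrow> bool" where
  "runs_within c st K P \<longleftrightarrow> (\<exists>t st'. exec c st t st' \<and> t \<le> K \<and> P st')"

lemma runs_within_loop_free:
  "loop_free c \<Longrightarrow> P (straight_run c st) \<Longrightarrow> step_bound c \<le> K \<Longrightarrow> runs_within c st K P"
  unfolding runs_within_def using exec_straight_run by (meson le_trans)

lemma runs_within_Seq:
  "runs_within c\<^sub>1 st K\<^sub>1 Q \<Longrightarrow> (\<And>st'. Q st' \<Longrightarrow> runs_within c\<^sub>2 st' K\<^sub>2 P) \<Longrightarrow>
    runs_within (Seq c\<^sub>1 c\<^sub>2) st (K\<^sub>1 + K\<^sub>2) P"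
  unfolding runs_within_def by (meson add_mono exec.Seq)

lemma runs_within_mono:
  "runs_within c st K P \<Longrightarrow> K \<le> K' \<Longrightarrow> (\<And>st'. P st' \<Longrightarrow> P' st') \<Longrightarrow> runs_within c st K' P'"
  unfolding runs_within_def by (meson le_trans)

lemma runs_within_While:
  assumes step: "\<And>k st. I k st \<Longrightarrow> k < m \<Longrightarrow> bval b st \<and> runs_within c st K (I (Suc k))"
    and stop: "\<And>st. I m st \<Longrightarrow> \<not> bval b st"
    and "I 0 st"
  shows "runs_within (While b c) st (m * (K + 1) + 1) (I m)"
proof -
  have "runs_within (While b c) st ((m - k) * (K + 1) + 1) (I m)" if "I k st" "k \<le> m" for k st
    using that
  proof (induction "m - k" arbitrary: k st)
    case 0
    then show ?case using exec.WhileF[OF stop] by (fastforce simp: runs_within_def)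
  next
    case (Suc x)
    then have "k < m" by simp
    with step[OF Suc.prems(1)] obtain t\<^sub>1 st\<^sub>1
      where "bval b st" "exec c st t\<^sub>1 st\<^sub>1" "t\<^sub>1 \<le> K" "I (Suc k) st\<^sub>1"
      unfolding runs_within_def by blast
    moreover obtain t\<^sub>2 st\<^sub>2 where "exec (While b c) st\<^sub>1 t\<^sub>2 st\<^sub>2"
      "t\<^sub>2 \<le> (m - Suc k) * (K + 1) + 1" "I m st\<^sub>2"
    proof -
      have "x = m - Suc k" using Suc.hyps(2) by simp
      from Suc.hyps(1)[OF this \<open>I (Suc k) st\<^sub>1\<close>] \<open>k < m\<close> show ?thesis
        using that unfolding runs_within_def by auto
    qed
    moreover have "m - k = Suc (m - Suc k)" using \<open>k < m\<close> by simp
    ultimately show ?case unfolding runs_within_def by (fastforce intro: exec.WhileT)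
  qed
  from this[of 0] \<open>I 0 st\<close> show ?thesis by simp
qed

section \<open>The decision procedure\<close>

text \<open>Registers: 0--3 hold the input \<open>n, s, \<Delta>, r\<close>; 4 holds \<open>s + \<Delta>\<close>, 5 the dissolved count
  \<open>d\<close>, 6 \<open>d + r\<close>, 7 the threshold; 8 and 9 are loop counters, 10 a rank accumulator,
  11 the qualified count, 12 the canonical end \<open>q\<close> and 13 the balance
  \<open>\<Sum>D \<alpha> - \<Sum>R (threshold - \<alpha>)\<close>. Array 1 receives the ranks.\<close>
definition prepare :: com where
  "prepare = Seq (Assign 4 (Plus (Reg 1) (Reg 2)))
     (Seq (Assign 5 (Div (Times (Reg 0) (Reg 2)) (Reg 4)))
     (Seq (Assign 6 (Plus (Reg 5) (Reg 3)))
     (Seq (Assign 7 (Plus (Div (Reg 4) (N 2)) (N 1))) (Assign 8 (N 0)))))"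

definition count_before :: com where
  "count_before =
     Seq (If (Less (Arr 0 (Reg 8)) (Arr 0 (Reg 9))) (Assign 10 (Plus (Reg 10) (N 1)))
          (If (And (Eq (Arr 0 (Reg 9)) (Arr 0 (Reg 8))) (Less (Reg 9) (Reg 8)))
              (Assign 10 (Plus (Reg 10) (N 1))) SKIP))
       (Assign 9 (Plus (Reg 9) (N 1)))"

definition rank_round :: com where
  "rank_round = Seq (Seq (Assign 9 (N 0)) (Assign 10 (N 0)))
     (Seq (While (Less (Reg 9) (Reg 0)) count_before)
          (Seq (ArrAssign 1 (Reg 8) (Reg 10)) (Assign 8 (Plus (Reg 8) (N 1)))))"

definition start_counting :: com where
  "start_counting = Seq (Assign 8 (N 0)) (Assign 11 (N 0))"

definition count_qualified_round :: com where
  "count_qualified_round =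
     Seq (If (Less (Plus (Arr 0 (Reg 8)) (Reg 2)) (Reg 7)) SKIP (Assign 11 (Plus (Reg 11) (N 1))))
       (Assign 8 (Plus (Reg 8) (N 1)))"

definition set_canonical_end :: com where
  "set_canonical_end =
     Seq (If (Less (Reg 6) (Reg 11)) (Assign 12 (Reg 6)) (Assign 12 (Reg 11)))
       (Seq (Assign 8 (N 0)) (Assign 13 (N 0)))"

text \<open>The test \<open>rank + r < q\<close> encodes \<open>rank < q - r\<close> with truncated subtraction.\<close>
definition balance_round :: com where
  "balance_round =
     Seq (If (Less (Arr 1 (Reg 8)) (Reg 6))
            (If (And (Not (Less (Plus (Arr 1 (Reg 8)) (Reg 3)) (Reg 12))) (Less (Arr 1 (Reg 8)) (Reg 12)))
                (If (Less (Arr 0 (Reg 8)) (Reg 7))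
                    (Assign 13 (Minus (Reg 13) (Minus (Reg 7) (Arr 0 (Reg 8))))) SKIP)
                (Assign 13 (Plus (Reg 13) (Arr 0 (Reg 8)))))
            SKIP)
       (Assign 8 (Plus (Reg 8) (N 1)))"

definition decide :: com where
  "decide =
     If (And (Eq (Mod (Times (Reg 0) (Reg 2)) (Reg 4)) (N 0))
         (And (Less (N 0) (Reg 5))
         (And (Not (Less (Reg 0) (Reg 6)))
         (And (Not (Less (Reg 12) (Reg 3))) (Not (Less (Reg 13) (N 0)))))))
       (Assign 0 (N 1)) (Assign 0 (N 0))"

definition for_all_vertices :: "com \<Rightarrow> com" where
  "for_all_vertices c = While (Less (Reg 8) (Reg 0)) c"

definition decider :: com where
  "decider =
     Seq prepare (Seq (for_all_vertices rank_round)
       (Seq start_counting (Seq (for_all_vertices count_qualified_round)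
       (Seq set_canonical_end (Seq (for_all_vertices balance_round) decide)))))"

definition loaded :: "nat \<Rightarrow> nat \<Rightarrow> nat \<Rightarrow> nat \<Rightarrow> (nat \<Rightarrow> nat) \<Rightarrow> state \<Rightarrow> bool" where
  "loaded n s \<Delta> r \<alpha> st \<longleftrightarrow>
     regs st 0 = int n \<and> regs st 1 = int s \<and> regs st 2 = int \<Delta> \<and> regs st 3 = int r \<and>
     regs st 4 = int (s + \<Delta>) \<and> regs st 5 = int (dissolved_count n s \<Delta>) \<and>
     regs st 6 = int (dissolved_count n s \<Delta> + r) \<and> regs st 7 = int (threshold s \<Delta>) \<and>
     (\<forall>i<n. arrs st 0 (int i) = int (\<alpha> i))"

definition ranks_stored :: "nat \<Rightarrow> (nat \<Rightarrow> nat) \<Rightarrow> nat \<Rightarrow> state \<Rightarrow> bool" where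
  "ranks_stored n \<alpha> k st \<longleftrightarrow> (\<forall>i<k. arrs st 1 (int i) = int (rank n \<alpha> i))"

definition counting_before :: "nat \<Rightarrow> nat \<Rightarrow> nat \<Rightarrow> nat \<Rightarrow> (nat \<Rightarrow> nat) \<Rightarrow> nat \<Rightarrow> nat \<Rightarrow> state \<Rightarrow> bool" where
  "counting_before n s \<Delta> r \<alpha> i j st \<longleftrightarrow> loaded n s \<Delta> r \<alpha> st \<and> ranks_stored n \<alpha> i st \<and>
     regs st 8 = int i \<and> regs st 9 = int j \<and>
     regs st 10 = int (card {l. l < j \<and> ranks_before \<alpha> l i})"

definition ranking :: "nat \<Rightarrow> nat \<Rightarrow> nat \<Rightarrow> nat \<Rightarrow> (nat \<Rightarrow> nat) \<Rightarrow> nat \<Rightarrow> state \<Rightarrow> bool" where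
  "ranking n s \<Delta> r \<alpha> k st \<longleftrightarrow> loaded n s \<Delta> r \<alpha> st \<and> ranks_stored n \<alpha> k st \<and> regs st 8 = int k"

definition counting_qualified ::
  "nat \<Rightarrow> nat \<Rightarrow> nat \<Rightarrow> nat \<Rightarrow> (nat \<Rightarrow> nat) \<Rightarrow> nat \<Rightarrow> state \<Rightarrow> bool" where
  "counting_qualified n s \<Delta> r \<alpha> k st \<longleftrightarrow> loaded n s \<Delta> r \<alpha> st \<and> ranks_stored n \<alpha> n st \<and>
     regs st 8 = int k \<and> regs st 11 = int (card {i. i < k \<and> threshold s \<Delta> \<le> \<alpha> i + \<Delta>})"

definition balance_term :: "nat \<Rightarrow> nat \<Rightarrow> nat \<Rightarrow> nat \<Rightarrow> (nat \<Rightarrow> nat) \<Rightarrow> nat \<Rightarrow> int" where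
  "balance_term n s \<Delta> r \<alpha> i =
     (if i \<in> canonical_D n s \<Delta> r \<alpha> then int (\<alpha> i) else 0) -
     (if i \<in> canonical_R n s \<Delta> r \<alpha> then int (threshold s \<Delta> - \<alpha> i) else 0)"

definition balancing :: "nat \<Rightarrow> nat \<Rightarrow> nat \<Rightarrow> nat \<Rightarrow> (nat \<Rightarrow> nat) \<Rightarrow> nat \<Rightarrow> state \<Rightarrow> bool" where
  "balancing n s \<Delta> r \<alpha> k st \<longleftrightarrow> loaded n s \<Delta> r \<alpha> st \<and> ranks_stored n \<alpha> n st \<and>
     regs st 8 = int k \<and> regs st 12 = int (canonical_end n s \<Delta> r \<alpha>) \<and>
     regs st 13 = (\<Sum>i<k. balance_term n s \<Delta> r \<alpha> i)"

lemma card_less_Suc_conj: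
  "card {i. i < Suc k \<and> P i} = card {i. i < k \<and> P i} + (if P k then 1 else 0)"
proof -
  have "{i. i < Suc k \<and> P i} = {i. i < k \<and> P i} \<union> (if P k then {k} else {})"
    by (auto simp: less_Suc_eq)
  then show ?thesis by (auto simp: card_insert_if)
qed

lemma prepare_correct: "runs_within prepare (init_state n s \<Delta> r \<alpha>) 5 (ranking n s \<Delta> r \<alpha> 0)"
  by (rule runs_within_loop_free)
    (auto simp: prepare_def init_state_def ranking_def loaded_def ranks_stored_def zdiv_int
      dissolved_count_def threshold_def)

lemma count_before_correct:
  assumes "counting_before n s \<Delta> r \<alpha> i j st" "i < n" "j < n"
  shows "runs_within count_before st 4 (counting_before n s \<Delta> r \<alpha> i (Suc j))"
  using assms
  by (intro runs_within_loop_free)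
    (auto simp: count_before_def counting_before_def loaded_def ranks_stored_def
      card_less_Suc_conj ranks_before_def)

lemma runs_within_for_all_vertices:
  assumes "\<And>k st. I k st \<Longrightarrow> k < n \<Longrightarrow> runs_within c st K (I (Suc k))"
    and "\<And>k st. I k st \<Longrightarrow> regs st 8 = int k \<and> regs st 0 = int n"
    and "I 0 st"
  shows "runs_within (for_all_vertices c) st (n * (K + 1) + 1) (I n)"
  unfolding for_all_vertices_def
  by (rule runs_within_While[where I = I]) (use assms in \<open>fastforce+\<close>)

lemma rank_round_correct:
  assumes "ranking n s \<Delta> r \<alpha> k st" "k < n"
  shows "runs_within rank_round st (n * 5 + 5) (ranking n s \<Delta> r \<alpha> (Suc k))"
proof -
  have "runs_within (Seq (Assign 9 (N 0)) (Assign 10 (N 0))) st 2 (counting_before n s \<Delta> r \<alpha> k 0)"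
    using assms
    by (intro runs_within_loop_free) (auto simp: counting_before_def ranking_def loaded_def ranks_stored_def)
  moreover have "runs_within (While (Less (Reg 9) (Reg 0)) count_before) st' (n * (4 + 1) + 1)
      (counting_before n s \<Delta> r \<alpha> k n)" if "counting_before n s \<Delta> r \<alpha> k 0 st'" for st'
    using that count_before_correct[OF _ \<open>k < n\<close>]
    by (intro runs_within_While[where I = "counting_before n s \<Delta> r \<alpha> k"])
      (auto simp: counting_before_def loaded_def)
  moreover have "runs_within (Seq (ArrAssign 1 (Reg 8) (Reg 10)) (Assign 8 (Plus (Reg 8) (N 1))))
      st' 2 (ranking n s \<Delta> r \<alpha> (Suc k))" if "counting_before n s \<Delta> r \<alpha> k n st'" for st'
    using that
    by (intro runs_within_loop_free)
      (auto simp: counting_before_def ranking_def loaded_def ranks_stored_def rank_def less_Suc_eq)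
  ultimately have "runs_within rank_round st (2 + ((n * (4 + 1) + 1) + 2)) (ranking n s \<Delta> r \<alpha> (Suc k))"
    unfolding rank_round_def by (blast intro: runs_within_Seq)
  then show ?thesis by (rule runs_within_mono) auto
qed

lemma count_qualified_round_correct:
  assumes "counting_qualified n s \<Delta> r \<alpha> k st" "k < n"
  shows "runs_within count_qualified_round st 3 (counting_qualified n s \<Delta> r \<alpha> (Suc k))"
  using assms
  by (intro runs_within_loop_free)
    (auto simp: count_qualified_round_def counting_qualified_def loaded_def ranks_stored_def
      card_less_Suc_conj)

lemma canonical_end_le: "canonical_end n s \<Delta> r \<alpha> \<le> dissolved_count n s \<Delta> + r"
  by (simp add: canonical_end_def)

lemma balance_round_correct:
  assumes "balancing n s \<Delta> r \<alpha> k st" "k < n"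
  shows "runs_within balance_round st 5 (balancing n s \<Delta> r \<alpha> (Suc k))"
proof (rule runs_within_loop_free)
  have "regs (straight_run balance_round st) 13 = regs st 13 + balance_term n s \<Delta> r \<alpha> k"
    using assms canonical_end_le[of n s \<Delta> r \<alpha>]
    by (auto simp: balance_round_def balancing_def loaded_def ranks_stored_def balance_term_def
        canonical_D_def canonical_R_def)
  with assms show "balancing n s \<Delta> r \<alpha> (Suc k) (straight_run balance_round st)"
    by (auto simp: balance_round_def balancing_def loaded_def ranks_stored_def)
qed (simp_all add: balance_round_def)

lemma sum_balance_term:
  "(\<Sum>i<n. balance_term n s \<Delta> r \<alpha> i) =
     int (\<Sum>v\<in>canonical_D n s \<Delta> r \<alpha>. \<alpha> v) - int (\<Sum>v\<in>canonical_R n s \<Delta> r \<alpha>. threshold s \<Delta> - \<alpha> v)"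
proof -
  have "canonical_D n s \<Delta> r \<alpha> \<subseteq> {..<n}" "canonical_R n s \<Delta> r \<alpha> \<subseteq> {..<n}"
    by (auto simp: canonical_D_def canonical_R_def)
  then show ?thesis
    by (simp add: balance_term_def sum_subtractf sum.If_cases Int_absorb1 Int_absorb2)
qed

lemma decide_correct:
  assumes "balancing n s \<Delta> r \<alpha> n st"
  shows "runs_within decide st 2 (\<lambda>st'. regs st' 0 \<noteq> 0 \<longleftrightarrow> canonical_test n s \<Delta> r \<alpha>)"
proof (rule runs_within_loop_free)
  have "int n * int \<Delta> mod int (s + \<Delta>) = int (n * \<Delta> mod (s + \<Delta>))" by (simp add: zmod_int)
  moreover have "0 \<le> regs st 13 \<longleftrightarrow>
      (\<Sum>v\<in>canonical_R n s \<Delta> r \<alpha>. threshold s \<Delta> - \<alpha> v) \<le> (\<Sum>v\<in>canonical_D n s \<Delta> r \<alpha>. \<alpha> v)"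
    using assms by (simp add: balancing_def sum_balance_term del: of_nat_sum)
  ultimately show "regs (straight_run decide st) 0 \<noteq> 0 \<longleftrightarrow> canonical_test n s \<Delta> r \<alpha>"
    using assms by (auto simp: decide_def balancing_def loaded_def canonical_test_def simp del: of_nat_add)
qed (simp_all add: decide_def)

lemma rank_phase_correct:
  assumes "ranking n s \<Delta> r \<alpha> 0 st"
  shows "runs_within (for_all_vertices rank_round) st (n * (n * 5 + 6) + 1) (ranking n s \<Delta> r \<alpha> n)"
proof -
  have "runs_within (for_all_vertices rank_round) st (n * (n * 5 + 5 + 1) + 1) (ranking n s \<Delta> r \<alpha> n)"
  proof (rule runs_within_for_all_vertices[where I = "ranking n s \<Delta> r \<alpha>"])
    show "regs st' 8 = int k \<and> regs st' 0 = int n" if "ranking n s \<Delta> r \<alpha> k st'" for k st'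
      using that by (simp add: ranking_def loaded_def)
  qed (use assms rank_round_correct in auto)
  then show ?thesis by (simp add: algebra_simps)
qed

lemma start_counting_correct:
  "ranking n s \<Delta> r \<alpha> n st \<Longrightarrow>
    runs_within start_counting st 2 (counting_qualified n s \<Delta> r \<alpha> 0)"
  by (rule runs_within_loop_free)
    (auto simp: start_counting_def ranking_def counting_qualified_def loaded_def ranks_stored_def)

lemma count_phase_correct:
  assumes "counting_qualified n s \<Delta> r \<alpha> 0 st"
  shows "runs_within (for_all_vertices count_qualified_round) st (n * 4 + 1) (counting_qualified n s \<Delta> r \<alpha> n)"
proof -
  have "runs_within (for_all_vertices count_qualified_round) st (n * (3 + 1) + 1) (counting_qualified n s \<Delta> r \<alpha> n)"
  proof (rule runs_within_for_all_vertices[where I = "counting_qualified n s \<Delta> r \<alpha>"])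
    show "regs st' 8 = int k \<and> regs st' 0 = int n" if "counting_qualified n s \<Delta> r \<alpha> k st'" for k st'
      using that by (simp add: counting_qualified_def loaded_def)
  qed (use assms count_qualified_round_correct in auto)
  then show ?thesis by (simp add: algebra_simps)
qed

lemma set_canonical_end_correct:
  "counting_qualified n s \<Delta> r \<alpha> n st \<Longrightarrow>
    runs_within set_canonical_end st 4 (balancing n s \<Delta> r \<alpha> 0)"
  by (rule runs_within_loop_free)
    (auto simp: set_canonical_end_def counting_qualified_def balancing_def loaded_def ranks_stored_def
      canonical_end_def qualified_count_def)

lemma balance_phase_correct:
  assumes "balancing n s \<Delta> r \<alpha> 0 st"
  shows "runs_within (for_all_vertices balance_round) st (n * 6 + 1) (balancing n s \<Delta> r \<alpha> n)"
proof -
  have "runs_within (for_all_vertices balance_round) st (n * (5 + 1) + 1) (balancing n s \<Delta> r \<alpha> n)"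
  proof (rule runs_within_for_all_vertices[where I = "balancing n s \<Delta> r \<alpha>"])
    show "regs st' 8 = int k \<and> regs st' 0 = int n" if "balancing n s \<Delta> r \<alpha> k st'" for k st'
      using that by (simp add: balancing_def loaded_def)
  qed (use assms balance_round_correct in auto)
  then show ?thesis by (simp add: algebra_simps)
qed

lemma decider_correct:
  "runs_within decider (init_state n s \<Delta> r \<alpha>) (40 * (n\<^sup>2 + 1))
     (\<lambda>st'. regs st' 0 \<noteq> 0 \<longleftrightarrow> canonical_test n s \<Delta> r \<alpha>)"
proof -
  have "runs_within decider (init_state n s \<Delta> r \<alpha>)
      (5 + ((n * (n * 5 + 6) + 1) + (2 + ((n * 4 + 1) + (4 + ((n * 6 + 1) + 2))))))
      (\<lambda>st'. regs st' 0 \<noteq> 0 \<longleftrightarrow> canonical_test n s \<Delta> r \<alpha>)"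
    unfolding decider_def
    by (rule runs_within_Seq[OF prepare_correct
          runs_within_Seq[OF rank_phase_correct
          runs_within_Seq[OF start_counting_correct
          runs_within_Seq[OF count_phase_correct
          runs_within_Seq[OF set_canonical_end_correct
          runs_within_Seq[OF balance_phase_correct decide_correct]]]]]])
  moreover have "n \<le> n * n + 1" by (cases n) auto
  then have "5 + ((n * (n * 5 + 6) + 1) + (2 + ((n * 4 + 1) + (4 + ((n * 6 + 1) + 2))))) \<le> 40 * (n\<^sup>2 + 1)"
    by (simp add: power2_eq_square algebra_simps)
  ultimately show ?thesis by (rule runs_within_mono)
qed

theorem theorem5:
  shows "\<exists>(P :: com) (c :: nat). \<forall>n s \<Delta> r (\<alpha> :: nat \<Rightarrow> nat).
     s > 0 \<longrightarrow> \<Delta> > 0 \<longrightarrow> r > 0 \<longrightarrow> (\<forall>v < n. \<alpha> v \<le> s) \<longrightarrow>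
     (\<exists>t st'. exec P (init_state n s \<Delta> r \<alpha>) t st' \<and> t \<le> c * (n ^ 2 + 1) \<and>
        (regs st' 0 \<noteq> 0 \<longleftrightarrow> Biased_Dissolution {0..<n} (complete_edges n) s \<Delta> r \<alpha>))"
proof (rule exI[of _ decider], rule exI[of _ "40 :: nat"], intro allI impI)
  fix n s \<Delta> r :: nat and \<alpha> :: "nat \<Rightarrow> nat"
  assume "s > 0" "\<Delta> > 0" "r > 0" "\<forall>v < n. \<alpha> v \<le> s"
  then have "Biased_Dissolution {0..<n} (complete_edges n) s \<Delta> r \<alpha> \<longleftrightarrow> canonical_test n s \<Delta> r \<alpha>"
    by (intro Biased_Dissolution_complete_edges_iff_canonical_test)
  with decider_correct[of n s \<Delta> r \<alpha>]
  show "\<exists>t st'. exec decider (init_state n s \<Delta> r \<alpha>) t st' \<and> t \<le> 40 * (n ^ 2 + 1) \<and>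
      (regs st' 0 \<noteq> 0 \<longleftrightarrow> Biased_Dissolution {0..<n} (complete_edges n) s \<Delta> r \<alpha>)"
    unfolding runs_within_def by simp
qed

end
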